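(* Consider SALIQUANT. Then $\mathcal{SG}(0)=0$, and if $n$ is odd, then $\mathcal{SG}(n)=\frac{n-1}{2}$. Moreover, $\mathcal{SG}(n)<n/2$.
   Context: SALIQUANT is the impartial normal-play game on the nonnegative integers where from $n$ a player subtracts a nondivisor of $n$: $\mathrm{opt}(n)=\{n-k: 1\le k\le n,\ k\nmid n\}$; the player unable to move loses. $\mathcal{SG}$ denotes the Sprague-Grundy value (mex rule). *)

theory Defs
  imports Complex_Main
begin

definition opt :: "nat \<Rightarrow> nat set" where
  "opt n = {n - k | k. 1 \<le> k \<and> k \<le> n \<and> \<not> k dvd n}"

definition mex :: "nat set \<Rightarrow> nat" where
  "mex A = (LEAST m. m \<notin> A)"

function sg :: "nat \<Rightarrow> nat" where
  "sg n = mex (\<Union>m\<in>{m. m \<in> opt n \<and> m < n}. {sg m})"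
  by auto
termination
  by (relation "measure id") auto

text \<open>Every option is strictly smaller, so the guard m < n is vacuous.\<close>

end

theory Submission
  imports Defs
begin

text \<open>Subtracting 1 or n is never allowed, so every option m of n satisfies 1 \<le> m \<le> n - 2; by
  induction this gives SG(m) \<le> (m - 1)/2 < (n - 1)/2 for all options, hence SG(n) \<le> (n - 1)/2.
  If n is odd, every odd m < n is an option, since n - m is even and so cannot divide n; by
  induction these options realise all values below (n - 1)/2, so the mex is exactly (n - 1)/2.\<close>

declare sg.simps[simp del]

lemma mex_le: "b \<notin> A \<Longrightarrow> mex A \<le> b"
  unfolding mex_def by (rule Least_le)

lemma mex_eqI: "b \<notin> A \<Longrightarrow> {..<b} \<subseteq> A \<Longrightarrow> mex A = b"
  unfolding mex_def by (rule Least_equality) (auto simp: not_less[symmetric])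

lemma opt_bounds:
  assumes "m \<in> opt n"
  shows "1 \<le> m" and "m + 2 \<le> n"
proof -
  obtain k where k: "m = n - k" "1 \<le> k" "k \<le> n" "\<not> k dvd n"
    using assms unfolding opt_def by blast
  then have "k \<noteq> 1" and "k \<noteq> n" by auto
  with k show "1 \<le> m" and "m + 2 \<le> n" by auto
qed

lemma odd_in_opt:
  assumes "odd n" "odd m" "m < n"
  shows "m \<in> opt n"
proof -
  have "even (n - m)" using assms by simp
  then have "\<not> (n - m) dvd n"
    using \<open>odd n\<close> dvd_trans[of 2 "n - m" n] by blast
  then show ?thesis
    unfolding opt_def using \<open>m < n\<close> by (auto intro!: exI[of _ "n - m"])
qed

lemma sg_eq_mex_opt: "sg n = mex (sg ` opt n)"
proof -
  have "{m. m \<in> opt n \<and> m < n} = opt n"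
    using opt_bounds(2) by fastforce
  moreover have "(\<Union>m\<in>A. {sg m}) = sg ` A" for A
    by blast
  ultimately show ?thesis
    by (subst sg.simps) simp
qed

lemma half_notin_sg_opt:
  assumes "\<And>m. m \<in> opt n \<Longrightarrow> sg m \<le> (m - 1) div 2"
  shows "(n - 1) div 2 \<notin> sg ` opt n"
proof
  assume "(n - 1) div 2 \<in> sg ` opt n"
  then obtain m where "m \<in> opt n" and "(n - 1) div 2 = sg m"
    by blast
  with assms[of m] opt_bounds[of m n] show False
    by linarith
qed

lemma sg_le_half: "sg n \<le> (n - 1) div 2"
proof (induction n rule: less_induct)
  case (less n)
  have "(n - 1) div 2 \<notin> sg ` opt n"
  proof (rule half_notin_sg_opt)
    fix m
    assume "m \<in> opt n"
    then have "m < n"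
      using opt_bounds(2) by fastforce
    then show "sg m \<le> (m - 1) div 2"
      by (rule less.IH)
  qed
  then show ?case
    unfolding sg_eq_mex_opt[of n] by (rule mex_le)
qed

lemma sg_odd: "odd n \<Longrightarrow> sg n = (n - 1) div 2"
proof (induction n rule: less_induct)
  case (less n)
  have "(n - 1) div 2 \<notin> sg ` opt n"
    by (rule half_notin_sg_opt) (rule sg_le_half)
  moreover have "{..<(n - 1) div 2} \<subseteq> sg ` opt n"
  proof
    fix c assume "c \<in> {..<(n - 1) div 2}"
    then have "2 * c + 1 < n" by auto
    then have "2 * c + 1 \<in> opt n" and "sg (2 * c + 1) = c"
      using odd_in_opt[OF less.prems] less.IH by auto
    then show "c \<in> sg ` opt n"
      by (metis image_eqI)
  qed
  ultimately show ?case
    unfolding sg_eq_mex_opt[of n] by (rule mex_eqI)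
qed

theorem mainTheorem5:
  shows "sg 0 = 0 \<and> (\<forall>n. odd n \<longrightarrow> sg n = (n - 1) div 2)
         \<and> (\<forall>n. n \<ge> 1 \<longrightarrow> real (sg n) < real n / 2)"
proof (intro conjI allI impI)
  show "sg 0 = 0"
    using sg_le_half[of 0] by simp
next
  fix n :: nat
  assume "odd n"
  then show "sg n = (n - 1) div 2" by (rule sg_odd)
next
  fix n :: nat
  assume "n \<ge> 1"
  then have "2 * sg n < n"
    using sg_le_half[of n] by linarith
  then show "real (sg n) < real n / 2" by linarith
qed

end
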